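(* For $t \in \{0,1,\dots,T\}$ let \[\varphi(t) := \sum_{s=1}^t \nabla L^s(\mathbf{w}^s)\cdot(\mathbf{w}^s - \mathbf{w}^{s+1}) + 19 m^2\gamma^2\eta (T-t) - 4\gamma\sum_{i=1}^m \ln w_i^{t+1},\] where $\nabla L^s(\mathbf{w}^s) = (\partial_1 L^s(\mathbf{w}^s),\dots,\partial_m L^s(\mathbf{w}^s))$. Fix $\alpha\in(0,1/2)$, $m$, $n$. For all sufficiently large $T$, in every run of Algorithm 1 in which the small gradient assumption holds, $\varphi(t)$ is a decreasing function of $t$.
   Context: Setting. There are $m$ experts and $n$ outcomes; $\Delta^k$ is the probability simplex in $\mathbb{R}^k$. For reports $\mathbf{p}^1,\dots,\mathbf{p}^m\in\Delta^n$ and $\mathbf{w}\in\Delta^m$, the logarithmic pool is $p^*_j(\mathbf{w}) = \frac{\prod_k (p^k_j)^{w_k}}{\sum_{\ell}\prod_k (p^k_\ell)^{w_k}}$. At each time $t\in[T]$, reports $\mathbf{p}^{t,1},\dots,\mathbf{p}^{t,m}$ and an outcome $j_t$ are revealed, with loss $L^t(\mathbf{w}) := -\ln p^*_{j_t}(\mathbf{w})$ and, by convention, $\partial_i L^t(\mathbf{w}) := \sum_{\ell} p^*_\ell(\mathbf{w}) \ln p^{t,i}_\ell - \ln p^{t,i}_{j_t}$. Algorithm 1 (parameter $\alpha \in (0,1/2)$): $R(\mathbf{w}) = -\frac{1}{\alpha}\sum_i w_i^\alpha$, $\eta = \frac{1}{\sqrt{T}\ln T}\cdot\frac{1}{12 m^{(1+\alpha)/2}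 n}$, $\mathbf{w}^1 = (1/m,\dots,1/m)$, $\eta_0=+\infty$. For $t=1,\dots,T$: if $\eta \le \min_i (w_i^t)^\alpha$ set $\eta_t = \min(\eta_{t-1},\eta)$, else $\eta_t = \min(\eta_{t-1}, \min_i w_i^t)$; then $\mathbf{w}^{t+1}\in\Delta^m$ is defined by $-(w_i^{t+1})^{\alpha-1} = -(w_i^t)^{\alpha-1} - \eta_t\partial_i L^t(\mathbf{w}^t) + c$ for all $i$, with $c$ the unique constant making $\sum_i w_i^{t+1}=1$. Let $\gamma := 12 n \ln T$. The small gradient assumption holds for a run if for every $t\in[T]$ and $i\in[m]$: $-\frac{\gamma}{w_i^t} \le \partial_i L^t(\mathbf{w}^t) \le \gamma$. *)

theory Defs
  imports Complex_Main
begin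

text \<open>Experts are indexed by 1..m, outcomes by 1..n, time steps by 1..T.
  A report profile at one time step is P :: nat => nat => real with P i j = p^i_j.\<close>

definition in_simplex :: "nat \<Rightarrow> (nat \<Rightarrow> real) \<Rightarrow> bool" where
  "in_simplex k p \<longleftrightarrow> (\<forall>i\<in>{1..k}. 0 \<le> p i) \<and> (\<Sum>i=1..k. p i) = 1"

definition log_pool :: "nat \<Rightarrow> nat \<Rightarrow> (nat \<Rightarrow> nat \<Rightarrow> real) \<Rightarrow> (nat \<Rightarrow> real) \<Rightarrow> nat \<Rightarrow> real" where
  "log_pool m n P w j =
     (\<Prod>k=1..m. P k j powr w k) / (\<Sum>l=1..n. \<Prod>k=1..m. P k l powr w k)"

definition loss_grad :: "nat \<Rightarrow> nat \<Rightarrow> (nat \<Rightarrow> nat \<Rightarrow> real) \<Rightarrow> nat \<Rightarrow> (nat \<Rightarrow> real) \<Rightarrow> nat \<Rightarrow> real" where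
  "loss_grad m n P j w i = (\<Sum>l=1..n. log_pool m n P w l * ln (P i l)) - ln (P i j)"

definition eta_base :: "real \<Rightarrow> nat \<Rightarrow> nat \<Rightarrow> nat \<Rightarrow> real" where
  "eta_base \<alpha> m n T = 1 / (sqrt (real T) * ln (real T)) * (1 / (12 * real m powr ((1 + \<alpha>) / 2) * real n))"

definition eta_cand :: "real \<Rightarrow> nat \<Rightarrow> nat \<Rightarrow> nat \<Rightarrow> (nat \<Rightarrow> nat \<Rightarrow> real) \<Rightarrow> nat \<Rightarrow> real" where
  "eta_cand \<alpha> m n T w t =
     (if eta_base \<alpha> m n T \<le> Min ((\<lambda>i. w t i powr \<alpha>) ` {1..m})
      then eta_base \<alpha> m n T else Min ((\<lambda>i. w t i) ` {1..m}))"

text \<open>eta_t = min(eta_{t-1}, candidate_t) with eta_0 = +infinity, i.e. the minimum of the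
  candidates at steps 1..t.\<close>
definition eta_run :: "real \<Rightarrow> nat \<Rightarrow> nat \<Rightarrow> nat \<Rightarrow> (nat \<Rightarrow> nat \<Rightarrow> real) \<Rightarrow> nat \<Rightarrow> real" where
  "eta_run \<alpha> m n T w t = Min ((eta_cand \<alpha> m n T w) ` {1..t})"

definition valid_input :: "nat \<Rightarrow> nat \<Rightarrow> nat \<Rightarrow> (nat \<Rightarrow> nat \<Rightarrow> nat \<Rightarrow> real) \<Rightarrow> (nat \<Rightarrow> nat) \<Rightarrow> bool" where
  "valid_input m n T p J \<longleftrightarrow>
     (\<forall>t\<in>{1..T}. J t \<in> {1..n} \<and>
        (\<forall>i\<in>{1..m}. in_simplex n (p t i) \<and> (\<forall>j\<in>{1..n}. 0 < p t i j)))"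

text \<open>A run of Algorithm 1: w t is the weight vector w^t, for t = 1..T+1.\<close>
definition alg1_run :: "real \<Rightarrow> nat \<Rightarrow> nat \<Rightarrow> nat \<Rightarrow> (nat \<Rightarrow> nat \<Rightarrow> nat \<Rightarrow> real) \<Rightarrow> (nat \<Rightarrow> nat)
     \<Rightarrow> (nat \<Rightarrow> nat \<Rightarrow> real) \<Rightarrow> bool" where
  "alg1_run \<alpha> m n T p J w \<longleftrightarrow>
     (\<forall>i\<in>{1..m}. w 1 i = 1 / real m) \<and>
     (\<forall>t\<in>{1..T}.
        in_simplex m (w (t + 1)) \<and> (\<forall>i\<in>{1..m}. 0 < w (t + 1) i) \<and>
        (\<exists>c. \<forall>i\<in>{1..m}.
            - (w (t + 1) i powr (\<alpha> - 1)) =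
            - (w t i powr (\<alpha> - 1)) - eta_run \<alpha> m n T w t * loss_grad m n (p t) (J t) (w t) i + c))"

definition gamma_const :: "nat \<Rightarrow> nat \<Rightarrow> real" where
  "gamma_const n T = 12 * real n * ln (real T)"

definition small_gradient :: "nat \<Rightarrow> nat \<Rightarrow> nat \<Rightarrow> (nat \<Rightarrow> nat \<Rightarrow> nat \<Rightarrow> real) \<Rightarrow> (nat \<Rightarrow> nat)
     \<Rightarrow> (nat \<Rightarrow> nat \<Rightarrow> real) \<Rightarrow> bool" where
  "small_gradient m n T p J w \<longleftrightarrow>
     (\<forall>t\<in>{1..T}. \<forall>i\<in>{1..m}.
        - gamma_const n T / w t i \<le> loss_grad m n (p t) (J t) (w t) i \<and>
        loss_grad m n (p t) (J t) (w t) i \<le> gamma_const n T)"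

definition phi :: "real \<Rightarrow> nat \<Rightarrow> nat \<Rightarrow> nat \<Rightarrow> (nat \<Rightarrow> nat \<Rightarrow> nat \<Rightarrow> real) \<Rightarrow> (nat \<Rightarrow> nat)
     \<Rightarrow> (nat \<Rightarrow> nat \<Rightarrow> real) \<Rightarrow> nat \<Rightarrow> real" where
  "phi \<alpha> m n T p J w t =
     (\<Sum>s=1..t. \<Sum>i=1..m. loss_grad m n (p s) (J s) (w s) i * (w s i - w (s + 1) i))
     + 19 * (real m)\<^sup>2 * (gamma_const n T)\<^sup>2 * eta_base \<alpha> m n T * (real T - real t)
     - 4 * gamma_const n T * (\<Sum>i=1..m. ln (w (t + 1) i))"

end

theory Submission
  imports Defs
begin

text \<open>In the dual coordinates x \<mapsto> x^(\<alpha>-1) a step of Algorithm 1 reads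
  (w_i^(t+1))^(\<alpha>-1) = (w_i^t)^(\<alpha>-1) + \<eta>_t (\<partial>_i L + d) for a normalising constant d.
  Tangent-line inequalities for x^(\<alpha>-1), summed over the experts against \<Sum>w = 1, trap d between
  -\<gamma> and 11/10 \<gamma> m as long as every relative step \<eta>_t \<gamma> w_i^(-\<alpha>) is small. Hence each dual
  weight grows by at most \<eta>\<gamma>(1 + 11/10 m) per step, and a coordinatewise estimate (the tangent
  inequality at the old or at the new weight, together with ln x \<le> x - 1) bounds
  \<nabla>L\<cdot>(w^t - w^(t+1)) + 4\<gamma> \<Sum> ln (w_i^t / w_i^(t+1)) by 19 m^2 \<gamma>^2 \<eta>, which is exactly
  \<phi>(t) \<le> \<phi>(t - 1). Since \<eta>\<gamma> \<le> T^(-1/2), the dual weights stay O(\<surd>T) over the whole run, and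
  this keeps every relative step small once T is large.\<close>

lemma powr_ge_tangent_at_one:
  fixes t p :: real
  assumes "0 < t" "p \<le> 0"
  shows "1 + p * (t - 1) \<le> t powr p"
proof -
  have "p * (t - 1) \<le> p * ln t"
    using assms ln_le_minus_one[of t] by (simp add: mult_left_mono_neg)
  also have "1 + p * ln t \<le> exp (p * ln t)"
    by (rule exp_ge_add_one_self)
  finally show ?thesis
    using assms by (simp add: powr_def)
qed

text \<open>The tangent line of y \<mapsto> y^(a-1) at x, multiplied by x^(2-a).\<close>
lemma powr_tangent_ineq:
  fixes a x y :: real
  assumes "a \<le> 1" "0 < x" "0 < y"
  shows "(1 - a) * (x - y) \<le> (y powr (a - 1) - x powr (a - 1)) * x powr (2 - a)"
proof -
  define t where "t = y / x"
  have "0 < t" and y: "y = x * t"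
    using assms by (auto simp: t_def)
  have "x powr (a - 1) * x powr (2 - a) = x"
    using assms by (simp add: powr_add [symmetric])
  then have eq: "(y powr (a - 1) - x powr (a - 1)) * x powr (2 - a) = x * (t powr (a - 1) - 1)"
    using \<open>0 < t\<close> assms by (simp add: y powr_mult algebra_simps)
  have "(1 - a) * (1 - t) \<le> t powr (a - 1) - 1"
    using powr_ge_tangent_at_one [of t "a - 1"] \<open>0 < t\<close> assms by (simp add: algebra_simps)
  then have "x * ((1 - a) * (1 - t)) \<le> x * (t powr (a - 1) - 1)"
    using assms by (simp add: mult_left_mono)
  then show ?thesis
    unfolding eq by (simp add: y algebra_simps)
qed

lemma ln_diff_le_powr_diff:
  fixes a x y :: real
  assumes "0 < x" "0 < y"
  shows "(1 - a) * (ln x - ln y) \<le> (y powr (a - 1) - x powr (a - 1)) * x powr (1 - a)"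
proof -
  have inv: "x powr (1 - a) = 1 / x powr (a - 1)"
    using assms by (simp add: powr_minus_divide [symmetric])
  have "(1 - a) * (ln x - ln y) = ln (y powr (a - 1) / x powr (a - 1))"
    using assms by (simp add: ln_div algebra_simps)
  also have "\<dots> \<le> y powr (a - 1) / x powr (a - 1) - 1"
    using assms by (intro ln_le_minus_one) simp
  also have "\<dots> = (y powr (a - 1) - x powr (a - 1)) * x powr (1 - a)"
    using assms by (simp add: inv field_simps)
  finally show ?thesis .
qed

lemma le_div_square_if_powr_ge:
  fixes p \<rho> x y :: real
  assumes "0 < x" "0 < y" "p \<le> -1/2" "0 < \<rho>" "\<rho> \<le> 1" "\<rho> * x powr p \<le> y powr p"
  shows "y \<le> x / \<rho>\<^sup>2"
proof -
  have "y = (y powr p) powr (1 / p)"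
    using assms by (simp add: powr_powr)
  also have "\<dots> \<le> (\<rho> * x powr p) powr (1 / p)"
    using assms by (intro powr_mono2') (auto simp: divide_nonpos_neg)
  also have "\<dots> = \<rho> powr (1 / p) * x"
    using assms by (simp add: powr_mult powr_powr)
  also have "\<rho> powr (1 / p) \<le> \<rho> powr (-2)"
    using assms by (intro powr_mono') (auto simp: field_simps)
  finally show ?thesis
    using assms by (simp add: powr_minus_divide power2_eq_square mult_right_mono powr_numeral [symmetric])
qed

lemma ge_div_square_if_powr_le:
  fixes p \<rho> x y :: real
  assumes "0 < x" "0 < y" "p \<le> -1/2" "1 \<le> \<rho>" "y powr p \<le> \<rho> * x powr p"
  shows "x / \<rho>\<^sup>2 \<le> y"
proof -
  have "\<rho> powr (-2) \<le> \<rho> powr (1 / p)"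
    using assms by (intro powr_mono) (auto simp: field_simps)
  also have "\<rho> powr (1 / p) * x = (\<rho> * x powr p) powr (1 / p)"
    using assms by (simp add: powr_mult powr_powr)
  also have "\<dots> \<le> (y powr p) powr (1 / p)"
    using assms by (intro powr_mono2') (auto simp: divide_nonpos_neg)
  also have "\<dots> = y"
    using assms by (simp add: powr_powr)
  finally show ?thesis
    using assms by (simp add: powr_minus_divide power2_eq_square mult_right_mono powr_numeral [symmetric])
qed

lemma powr_le_square_mult:
  fixes b k x y :: real
  assumes "0 < x" "0 \<le> y" "0 \<le> b" "b \<le> 2" "1 \<le> k" "y \<le> k * x"
  shows "y powr b \<le> k\<^sup>2 * x powr b"
proof -
  have "y powr b \<le> (k * x) powr b"
    using assms by (intro powr_mono2) auto
  also have "\<dots> = k powr b * x powr b"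
    using assms by (simp add: powr_mult)
  also have "k powr b \<le> k\<^sup>2"
    using assms powr_mono [of b 2 k] by (simp add: powr_numeral)
  finally show ?thesis
    by (simp add: mult_right_mono)
qed

lemma powr_ge_square_mult:
  fixes b k x y :: real
  assumes "0 < x" "0 \<le> b" "b \<le> 2" "0 < k" "k \<le> 1" "k * x \<le> y"
  shows "k\<^sup>2 * x powr b \<le> y powr b"
proof -
  have "k\<^sup>2 \<le> k powr b"
    using assms powr_mono' [of b 2 k] by (simp add: powr_numeral)
  then have "k\<^sup>2 * x powr b \<le> k powr b * x powr b"
    by (simp add: mult_right_mono)
  also have "\<dots> = (k * x) powr b"
    using assms by (simp add: powr_mult)
  also have "\<dots> \<le> y powr b"
    using assms by (intro powr_mono2) auto
  finally show ?thesis .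
qed

lemma Chebyshev_sum_similarly_ordered:
  fixes f g :: "'i \<Rightarrow> 'a::linordered_idom"
  assumes "finite I" and similar: "\<And>i j. i \<in> I \<Longrightarrow> j \<in> I \<Longrightarrow> 0 \<le> (f i - f j) * (g i - g j)"
  shows "sum f I * sum g I \<le> of_nat (card I) * (\<Sum>i\<in>I. f i * g i)"
proof -
  have "0 \<le> (\<Sum>i\<in>I. \<Sum>j\<in>I. (f i - f j) * (g i - g j))"
    using similar by (intro sum_nonneg) auto
  also have "\<dots> = 2 * (of_nat (card I) * (\<Sum>i\<in>I. f i * g i) - sum f I * sum g I)"
    by (simp only: one_add_one [symmetric] algebra_simps)
      (simp add: algebra_simps sum_subtractf sum.distrib sum.swap [of "\<lambda>i j. f i * g j"]
        sum_distrib_left sum_distrib_right)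
  finally show ?thesis
    by simp
qed

text \<open>One step of the update in dual coordinates: e stands for the learning rate \<eta>_t, \<gamma> for
  the gradient bound and d = -c/\<eta>_t for the normalising constant.\<close>
locale power_update =
  fixes I :: "'i set" and a e \<gamma> d :: real and u v g :: "'i \<Rightarrow> real"
  assumes finite_I: "finite I" and I_nonempty: "I \<noteq> {}"
    and a_less_1: "a < 1"
    and e_pos: "0 < e" and gamma_pos: "0 < \<gamma>"
    and u_pos: "\<And>i. i \<in> I \<Longrightarrow> 0 < u i" and v_pos: "\<And>i. i \<in> I \<Longrightarrow> 0 < v i"
    and sum_u: "sum u I = 1" and sum_v: "sum v I = 1"
    and grad_ge: "\<And>i. i \<in> I \<Longrightarrow> -\<gamma> / u i \<le> g i" and grad_le: "\<And>i. i \<in> I \<Longrightarrow> g i \<le> \<gamma>"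
    and update: "\<And>i. i \<in> I \<Longrightarrow> v i powr (a - 1) = u i powr (a - 1) + e * (g i + d)"
begin

lemma u_le_one: "i \<in> I \<Longrightarrow> u i \<le> 1"
  using member_le_sum [of i I u] finite_I u_pos sum_u by (simp add: less_imp_le)

lemma grad_mult_ge: "i \<in> I \<Longrightarrow> -\<gamma> \<le> g i * u i"
  using grad_ge [of i] u_pos [of i] by (simp add: field_simps)

lemma u_powr_eqs:
  assumes "i \<in> I"
  shows "u i powr (2 - a) = u i * u i powr (1 - a)" "u i powr (1 - a) = u i * u i powr (-a)"
  using u_pos [OF assms] powr_add [of "u i" 1 "1 - a"] powr_add [of "u i" 1 "-a"] by simp_all

lemma u_powr_le:
  assumes "i \<in> I"
  shows "u i powr (2 - a) \<le> u i" "u i powr (1 - a) \<le> 1" "u i powr (1 - a) \<le> u i powr (-a)"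
proof -
  have u: "0 < u i" "u i \<le> 1"
    using assms u_pos u_le_one by auto
  show le1: "u i powr (1 - a) \<le> 1"
    using u a_less_1 by (intro powr_le1) auto
  show "u i powr (2 - a) \<le> u i"
    using u_powr_eqs(1) [OF assms] le1 u by (simp add: mult_left_le)
  show "u i powr (1 - a) \<le> u i powr (-a)"
    using u_powr_eqs(2) [OF assms] u by (simp add: mult_left_le_one_le)
qed

lemma grad_mult_powr_ge:
  assumes "i \<in> I" "0 \<le> k" "w powr (2 - a) \<le> k * u i powr (2 - a)"
  shows "-(k * \<gamma> * u i powr (1 - a)) \<le> g i * w powr (2 - a)"
proof (cases "0 \<le> g i")
  case True
  have "0 \<le> k * \<gamma> * u i powr (1 - a)"
    using assms(2) gamma_pos by simp
  moreover have "0 \<le> g i * w powr (2 - a)"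
    using True by simp
  ultimately show ?thesis
    by linarith
next
  case False
  have "-\<gamma> * u i powr (1 - a) \<le> g i * u i * u i powr (1 - a)"
    using grad_mult_ge [OF assms(1)] by (intro mult_right_mono) auto
  then have "-\<gamma> * u i powr (1 - a) \<le> g i * u i powr (2 - a)"
    using u_powr_eqs(1) [OF assms(1)] by (simp add: mult.assoc)
  from mult_left_mono [OF this assms(2)]
  have "-(k * \<gamma> * u i powr (1 - a)) \<le> k * (g i * u i powr (2 - a))"
    by simp
  also have "\<dots> \<le> g i * w powr (2 - a)"
    using mult_left_mono_neg [OF assms(3), of "g i"] False by (simp add: mult_ac)
  finally show ?thesis .
qed

lemma dual_step_factor:
  assumes "i \<in> I"
  shows "u i powr (a - 1) + e * (g i + \<delta>) = u i powr (a - 1) * (1 + e * (g i + \<delta>) * u i powr (1 - a))"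
proof -
  have "u i powr (a - 1) * u i powr (1 - a) = 1"
    using u_pos [OF assms] by (simp add: powr_add [symmetric])
  then show ?thesis
    by (simp add: algebra_simps)
qed

lemma ln_ratio_le:
  assumes "i \<in> I"
  shows "(1 - a) * (ln (u i) - ln (v i)) \<le> e * (g i + d) * u i powr (1 - a)"
  using ln_diff_le_powr_diff [of "u i" "v i" a] u_pos v_pos update assms by simp

text \<open>Both weight vectors sum to 1, so the tangent inequality at u, summed over I, forces
  \<gamma> + d \<ge> 0.\<close>
lemma normalizer_ge: "-\<gamma> \<le> d"
proof -
  have "(1 - a) * (u i - v i) \<le> e * (\<gamma> + d) * u i powr (2 - a)" if "i \<in> I" for i
  proof -
    have "(1 - a) * (u i - v i) \<le> e * (g i + d) * u i powr (2 - a)"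
      using powr_tangent_ineq [of a "u i" "v i"] a_less_1 u_pos v_pos update that by simp
    also have "\<dots> \<le> e * (\<gamma> + d) * u i powr (2 - a)"
      using grad_le [OF that] e_pos by (intro mult_right_mono mult_left_mono) auto
    finally show ?thesis .
  qed
  then have "(\<Sum>i\<in>I. (1 - a) * (u i - v i)) \<le> e * (\<gamma> + d) * (\<Sum>i\<in>I. u i powr (2 - a))"
    by (simp add: sum_distrib_left sum_mono)
  moreover have "(\<Sum>i\<in>I. (1 - a) * (u i - v i)) = 0"
    by (simp add: sum_distrib_left [symmetric] sum_subtractf sum_u sum_v)
  moreover have "0 < (\<Sum>i\<in>I. u i powr (2 - a))"
    using finite_I I_nonempty by (intro sum_pos) (simp_all add: u_pos less_imp_neq [symmetric])
  ultimately have "0 \<le> \<gamma> + d"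
    using e_pos by (simp add: zero_le_mult_iff)
  then show ?thesis
    by simp
qed

lemma sum_powr_le_card_mult: "(\<Sum>i\<in>I. u i powr (1 - a)) \<le> card I * (\<Sum>i\<in>I. u i powr (2 - a))"
proof -
  have "(\<Sum>i\<in>I. u i powr (1 - a)) * sum u I \<le> card I * (\<Sum>i\<in>I. u i powr (1 - a) * u i)"
  proof (rule Chebyshev_sum_similarly_ordered [OF finite_I])
    fix i j assume "i \<in> I" "j \<in> I"
    show "0 \<le> (u i powr (1 - a) - u j powr (1 - a)) * (u i - u j)"
    proof (cases "u i \<le> u j")
      case True
      then have "u i powr (1 - a) \<le> u j powr (1 - a)"
        using \<open>i \<in> I\<close> u_pos a_less_1 by (intro powr_mono2) (auto simp: less_imp_le)
      with True show ?thesis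
        by (intro mult_nonpos_nonpos) auto
    next
      case False
      then have "u j powr (1 - a) \<le> u i powr (1 - a)"
        using \<open>j \<in> I\<close> u_pos a_less_1 by (intro powr_mono2) (auto simp: less_imp_le)
      with False show ?thesis
        by (intro mult_nonneg_nonneg) auto
    qed
  qed
  then show ?thesis
    using u_powr_eqs(1) by (simp add: sum_u mult.commute)
qed

end

locale small_power_update = power_update +
  assumes a_nonneg: "0 \<le> a" and a_le_half: "a \<le> 1/2"
    and small_u: "\<And>i. i \<in> I \<Longrightarrow> e * \<gamma> * u i powr (-a) \<le> 1/500"
    and small_e: "e * \<gamma> * (1 + 11/10 * card I) \<le> 1/200"
begin

lemma relative_step_ge:
  assumes "i \<in> I" "-\<gamma> \<le> \<delta>"
  shows "-1/250 \<le> e * (g i + \<delta>) * u i powr (1 - a)"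
proof -
  have "e * (-\<gamma>) * u i powr (-a) \<le> e * (g i * u i) * u i powr (-a)"
    using grad_mult_ge [OF assms(1)] e_pos by (intro mult_right_mono mult_left_mono) auto
  moreover have "e * (-\<gamma>) * u i powr (-a) \<le> e * \<delta> * u i powr (1 - a)"
  proof -
    have "e * (-\<gamma>) * u i powr (-a) \<le> e * (-\<gamma>) * u i powr (1 - a)"
      using u_powr_le(3) [OF assms(1)] e_pos gamma_pos by simp
    also have "\<dots> \<le> e * \<delta> * u i powr (1 - a)"
      using assms(2) e_pos by (intro mult_right_mono mult_left_mono) auto
    finally show ?thesis .
  qed
  moreover have "e * (g i + \<delta>) * u i powr (1 - a)
      = e * (g i * u i) * u i powr (-a) + e * \<delta> * u i powr (1 - a)"
    using u_powr_eqs(2) [OF assms(1)] by (simp add: algebra_simps)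
  ultimately show ?thesis
    using small_u [OF assms(1)] by linarith
qed

lemma relative_step_le:
  assumes "i \<in> I" "\<delta> \<le> 11/10 * \<gamma> * card I"
  shows "e * (g i + \<delta>) * u i powr (1 - a) \<le> 1/200"
proof (cases "0 \<le> g i + \<delta>")
  case True
  then have "e * (g i + \<delta>) * u i powr (1 - a) \<le> e * (g i + \<delta>)"
    using u_powr_le(2) [OF assms(1)] e_pos by (simp add: mult_left_le)
  also have "\<dots> \<le> e * (\<gamma> * (1 + 11/10 * card I))"
    using grad_le [OF assms(1)] assms(2) e_pos by (intro mult_left_mono) (auto simp: algebra_simps)
  also have "\<dots> \<le> 1/200"
    using small_e by (simp add: mult.assoc)
  finally show ?thesis .
next
  case False
  then have "e * (g i + \<delta>) * u i powr (1 - a) \<le> 0"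
    using e_pos by (intro mult_nonpos_nonneg mult_nonneg_nonpos) auto
  then show ?thesis
    by simp
qed

lemma updated_powr_le:
  assumes "i \<in> I" "0 < w" "-\<gamma> \<le> \<delta>" "w powr (a - 1) = u i powr (a - 1) + e * (g i + \<delta>)"
  shows "w powr (2 - a) \<le> (250/249)^4 * u i powr (2 - a)"
proof -
  have u: "0 < u i" "0 < u i powr (a - 1)"
    using u_pos [OF assms(1)] by auto
  define r where "r = e * (g i + \<delta>) * u i powr (1 - a)"
  have w_eq: "w powr (a - 1) = (1 + r) * u i powr (a - 1)"
    using assms(4) dual_step_factor [OF assms(1)] by (simp add: r_def mult.commute)
  have "249/250 \<le> 1 + r"
    using relative_step_ge [OF assms(1,3)] by (simp add: r_def)
  then have "249/250 * u i powr (a - 1) \<le> w powr (a - 1)"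
    unfolding w_eq using u(2) by (intro mult_right_mono) auto
  then have "w \<le> (250/249)\<^sup>2 * u i"
    using le_div_square_if_powr_ge [of "u i" w "a - 1" "249/250"] u assms(2) a_le_half
    by (simp add: power2_eq_square)
  then show ?thesis
    using powr_le_square_mult [of "u i" w "2 - a" "(250/249)\<^sup>2"] u assms(2) a_nonneg a_less_1
    by simp
qed

lemma updated_powr_ge:
  assumes "i \<in> I" "0 < w" "\<delta> \<le> 11/10 * \<gamma> * card I"
    and "w powr (a - 1) = u i powr (a - 1) + e * (g i + \<delta>)"
  shows "(200/201)^4 * u i powr (2 - a) \<le> w powr (2 - a)"
proof -
  have u: "0 < u i" "0 < u i powr (a - 1)"
    using u_pos [OF assms(1)] by auto
  define r where "r = e * (g i + \<delta>) * u i powr (1 - a)"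
  have w_eq: "w powr (a - 1) = (1 + r) * u i powr (a - 1)"
    using assms(4) dual_step_factor [OF assms(1)] by (simp add: r_def mult.commute)
  have "1 + r \<le> 201/200"
    using relative_step_le [OF assms(1,3)] by (simp add: r_def)
  then have "w powr (a - 1) \<le> 201/200 * u i powr (a - 1)"
    unfolding w_eq using u(2) by (intro mult_right_mono) auto
  then have "(200/201)\<^sup>2 * u i \<le> w"
    using ge_div_square_if_powr_le [of "u i" w "a - 1" "201/200"] u assms(2) a_le_half
    by (simp add: power2_eq_square)
  then show ?thesis
    using powr_ge_square_mult [of "u i" "2 - a" "(200/201)\<^sup>2" w] u a_nonneg a_less_1
    by (simp add: power_mult [symmetric] power_le_one)
qed

lemma comparison_step:
  assumes "i \<in> I" "0 < w" "w powr (a - 1) = u i powr (a - 1) + e * (g i + 11/10 * \<gamma> * card I)"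
  shows "e * ((200/201)^4 * (11/10 * \<gamma> * card I) * u i powr (2 - a) - (250/249)^4 * \<gamma> * u i powr (1 - a))
    \<le> (1 - a) * (u i - w)"
proof -
  define D where "D = 11/10 * \<gamma> * card I"
  define k_lo :: real where "k_lo = (200/201)^4"
  define k_up :: real where "k_up = (250/249)^4"
  have D_nonneg: "0 \<le> D"
    using gamma_pos by (simp add: D_def)
  have "-\<gamma> \<le> D"
    using D_nonneg gamma_pos by linarith
  have w_up: "w powr (2 - a) \<le> k_up * u i powr (2 - a)"
    using updated_powr_le [OF assms(1,2) \<open>-\<gamma> \<le> D\<close>] assms(3) by (simp add: k_up_def D_def)
  have w_lo: "k_lo * u i powr (2 - a) \<le> w powr (2 - a)"
    using updated_powr_ge [OF assms(1,2) _ assms(3)] by (simp add: k_lo_def)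
  have D_part: "k_lo * D * u i powr (2 - a) \<le> D * w powr (2 - a)"
    using mult_left_mono [OF w_lo D_nonneg] by (simp only: mult_ac)
  have grad_part: "-(k_up * \<gamma> * u i powr (1 - a)) \<le> g i * w powr (2 - a)"
    using grad_mult_powr_ge [OF assms(1) _ w_up] by (simp add: k_up_def)
  have "k_lo * D * u i powr (2 - a) - k_up * \<gamma> * u i powr (1 - a) \<le> (g i + D) * w powr (2 - a)"
    using D_part grad_part by (simp add: distrib_right)
  then have "e * (k_lo * D * u i powr (2 - a) - k_up * \<gamma> * u i powr (1 - a)) \<le> e * (g i + D) * w powr (2 - a)"
    using e_pos by (simp add: mult.assoc mult_left_mono)
  also have "\<dots> \<le> (1 - a) * (u i - w)"
    using powr_tangent_ineq [of a w "u i"] u_pos assms a_less_1 by (simp add: D_def algebra_simps)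
  finally show ?thesis
    by (simp add: D_def k_lo_def k_up_def)
qed

lemma sum_powr_comparison:
  "0 \<le> (\<Sum>i\<in>I. (200/201)^4 * (11/10 * \<gamma> * card I) * u i powr (2 - a) - (250/249)^4 * \<gamma> * u i powr (1 - a))"
proof -
  have "(250/249)^4 * \<gamma> * (\<Sum>i\<in>I. u i powr (1 - a)) \<le> (250/249)^4 * \<gamma> * (card I * (\<Sum>i\<in>I. u i powr (2 - a)))"
    using sum_powr_le_card_mult gamma_pos by (intro mult_left_mono) auto
  also have "\<dots> = (250/249)^4 * (\<gamma> * card I * (\<Sum>i\<in>I. u i powr (2 - a)))"
    by (simp only: mult_ac)
  also have "\<dots> \<le> (200/201)^4 * (11/10) * (\<gamma> * card I * (\<Sum>i\<in>I. u i powr (2 - a)))"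
    using gamma_pos sum_nonneg [of I "\<lambda>i. u i powr (2 - a)"] by (intro mult_right_mono) (auto simp: power_divide)
  also have "\<dots> = (200/201)^4 * (11/10 * \<gamma> * card I) * (\<Sum>i\<in>I. u i powr (2 - a))"
    by (simp only: mult_ac)
  finally show ?thesis
    by (simp add: sum_subtractf sum_distrib_left [symmetric] sum_divide_distrib [symmetric])
qed

text \<open>If d exceeded D = 11/10 \<gamma> |I|, the weights solving the update with D in place of d would
  dominate v and hence sum to more than 1; summing the comparison step shows they do not.\<close>
lemma normalizer_le: "d \<le> 11/10 * \<gamma> * card I"
proof (rule ccontr)
  define D where "D = 11/10 * \<gamma> * card I"
  assume "\<not> d \<le> 11/10 * \<gamma> * card I"
  then have "D < d"
    by (simp add: D_def)
  have "0 \<le> D"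
    using gamma_pos by (simp add: D_def)
  define w where "w i = (u i powr (a - 1) + e * (g i + D)) powr (1 / (a - 1))" for i
  have w: "0 < w i" "w i powr (a - 1) = u i powr (a - 1) + e * (g i + D)" if "i \<in> I" for i
  proof -
    have "-1/250 \<le> e * (g i + D) * u i powr (1 - a)"
      using relative_step_ge [OF that, of D] \<open>0 \<le> D\<close> gamma_pos by linarith
    then have "0 < u i powr (a - 1) + e * (g i + D)"
      using dual_step_factor [OF that, of D] u_pos [OF that] by simp
    then show "0 < w i" "w i powr (a - 1) = u i powr (a - 1) + e * (g i + D)"
      using a_less_1 by (simp_all add: w_def powr_powr)
  qed
  have "v i < w i" if "i \<in> I" for i
  proof (rule ccontr)
    assume "\<not> v i < w i"
    then have "v i powr (a - 1) \<le> w i powr (a - 1)"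
      using w [OF that] a_less_1 by (intro powr_mono2') auto
    then show False
      using update [OF that] w [OF that] \<open>D < d\<close> e_pos by simp
  qed
  then have "1 < sum w I"
    using sum_strict_mono [OF finite_I I_nonempty, of v w] sum_v by simp
  then have "(1 - a) * (1 - sum w I) < 0"
    using a_less_1 by (simp add: mult_pos_neg)
  moreover have "(\<Sum>i\<in>I. e * ((200/201)^4 * D * u i powr (2 - a) - (250/249)^4 * \<gamma> * u i powr (1 - a)))
      \<le> (\<Sum>i\<in>I. (1 - a) * (u i - w i))"
    using comparison_step w unfolding D_def by (intro sum_mono) auto
  moreover have "(\<Sum>i\<in>I. (1 - a) * (u i - w i)) = (1 - a) * (1 - sum w I)"
    by (simp add: sum_distrib_left [symmetric] sum_subtractf sum_u)
  moreover have "0 \<le> (\<Sum>i\<in>I. e * ((200/201)^4 * D * u i powr (2 - a) - (250/249)^4 * \<gamma> * u i powr (1 - a)))"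
    using sum_powr_comparison e_pos by (simp add: D_def sum_distrib_left [symmetric])
  ultimately show False
    by linarith
qed

lemma update_growth:
  assumes "i \<in> I"
  shows "v i powr (a - 1) \<le> u i powr (a - 1) + e * (\<gamma> * (1 + 11/10 * card I))"
proof -
  have "g i + d \<le> \<gamma> * (1 + 11/10 * card I)"
    using grad_le [OF assms] normalizer_le by (simp add: algebra_simps)
  then show ?thesis
    using update [OF assms] e_pos by (simp add: mult_left_mono)
qed

lemma coordinate_potential_le_of_nonneg:
  assumes "i \<in> I" "0 \<le> g i + d"
  defines "R \<equiv> \<gamma> * (1 + 11/10 * card I)"
  shows "(1 - a) * ((g i + d) * (u i - v i) + 4 * \<gamma> * (ln (u i) - ln (v i)))
    \<le> e * (R\<^sup>2 * u i + 4 * \<gamma> * R)"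
proof -
  define z where "z = g i + d"
  have u: "0 < u i" and v: "0 < v i" and z: "0 \<le> z" "z \<le> R"
    using u_pos v_pos assms grad_le [OF assms(1)] normalizer_le by (auto simp: z_def algebra_simps)
  have "(1 - a) * (u i - v i) \<le> e * z * u i powr (2 - a)"
    using powr_tangent_ineq [of a "u i" "v i"] a_less_1 u v update [OF assms(1)] by (simp add: z_def)
  from mult_left_mono [OF this z(1)]
  have "(1 - a) * (z * (u i - v i)) \<le> e * (z\<^sup>2 * u i powr (2 - a))"
    by (simp add: power2_eq_square mult_ac)
  also have "\<dots> \<le> e * (R\<^sup>2 * u i)"
    using z u_powr_le(1) [OF assms(1)] e_pos by (intro mult_left_mono mult_mono power_mono) auto
  finally have "(1 - a) * (z * (u i - v i)) \<le> e * (R\<^sup>2 * u i)" .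
  moreover have "z * u i powr (1 - a) \<le> R * 1"
    using z u_powr_le(2) [OF assms(1)] by (intro mult_mono) auto
  then have "4 * \<gamma> * ((1 - a) * (ln (u i) - ln (v i))) \<le> 4 * \<gamma> * (e * R)"
    using ln_ratio_le [OF assms(1)] e_pos gamma_pos
    by (intro mult_left_mono) (auto simp: z_def mult.assoc intro: order_trans)
  ultimately show ?thesis
    by (simp add: z_def algebra_simps)
qed

text \<open>When the dual weight of expert i decreases, the tangent inequality is applied at v i instead
  of u i; the ratio bound on v i / u i then lets the logarithmic term absorb the linear one.\<close>
lemma coordinate_potential_nonpos_of_neg:
  assumes "i \<in> I" "g i + d < 0"
  shows "(g i + d) * (u i - v i) + 4 * \<gamma> * (ln (u i) - ln (v i)) \<le> 0"
proof -
  define z where "z = g i + d"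
  have u: "0 < u i" "u i \<le> 1" and v: "0 < v i" and z: "z < 0"
    using u_pos v_pos u_le_one assms by (auto simp: z_def)
  have "e * z * v i powr (2 - a) \<le> (1 - a) * (u i - v i)"
    using powr_tangent_ineq [of a "v i" "u i"] a_less_1 u v update [OF assms(1)]
    by (simp add: z_def algebra_simps)
  from mult_left_mono_neg [OF this, of z] z
  have "(1 - a) * (z * (u i - v i)) \<le> e * z\<^sup>2 * v i powr (2 - a)"
    by (simp add: power2_eq_square mult_ac)
  also have "\<dots> \<le> e * z\<^sup>2 * (2 * u i powr (2 - a))"
  proof -
    have "v i powr (2 - a) \<le> (250/249)^4 * u i powr (2 - a)"
      using updated_powr_le [OF assms(1) v normalizer_ge update [OF assms(1)]] .
    also have "\<dots> \<le> 2 * u i powr (2 - a)"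
      by (intro mult_right_mono) (auto simp: power_divide)
    finally show ?thesis
      using e_pos by (intro mult_left_mono) auto
  qed
  also have "\<dots> = e * z * u i powr (1 - a) * (2 * (z * u i))"
    using u_powr_eqs(1) [OF assms(1)] by (simp add: power2_eq_square algebra_simps)
  finally have "(1 - a) * (z * (u i - v i) + 4 * \<gamma> * (ln (u i) - ln (v i)))
      \<le> e * z * u i powr (1 - a) * (2 * (z * u i) + 4 * \<gamma>)"
    using mult_left_mono [OF ln_ratio_le [OF assms(1)], of "4 * \<gamma>"] gamma_pos
    by (simp add: z_def algebra_simps)
  also have "\<dots> \<le> 0"
  proof (rule mult_nonpos_nonneg)
    show "e * z * u i powr (1 - a) \<le> 0"
      using z e_pos by (intro mult_nonpos_nonneg mult_nonneg_nonpos) auto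
    have "min 0 d \<le> d * u i"
      using u by (cases "0 \<le> d") (simp_all add: mult_le_cancel_left1)
    then show "0 \<le> 2 * (z * u i) + 4 * \<gamma>"
      using grad_mult_ge [OF assms(1)] normalizer_ge gamma_pos by (simp add: z_def algebra_simps)
  qed
  finally show ?thesis
    using a_less_1 by (simp add: z_def mult_le_0_iff)
qed

lemma coordinate_potential_le:
  assumes "i \<in> I"
  defines "R \<equiv> \<gamma> * (1 + 11/10 * card I)"
  shows "(g i + d) * (u i - v i) + 4 * \<gamma> * (ln (u i) - ln (v i)) \<le> 2 * e * (R\<^sup>2 * u i + 4 * \<gamma> * R)"
proof (cases "0 \<le> g i + d")
  case True
  define B where "B = e * (R\<^sup>2 * u i + 4 * \<gamma> * R)"
  have "0 \<le> B"
    using e_pos u_pos [OF assms(1)] gamma_pos by (simp add: B_def R_def)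
  from coordinate_potential_le_of_nonneg [OF assms(1) True]
  have "(g i + d) * (u i - v i) + 4 * \<gamma> * (ln (u i) - ln (v i)) \<le> B / (1 - a)"
    using a_less_1 by (simp add: B_def R_def pos_le_divide_eq mult.commute)
  also have "\<dots> \<le> 2 * B"
    using mult_left_mono [of 1 "2 * (1 - a)" B] \<open>0 \<le> B\<close> a_le_half a_less_1
    by (simp add: pos_divide_le_eq mult_ac)
  finally show ?thesis
    by (simp add: B_def)
next
  case False
  then have "(g i + d) * (u i - v i) + 4 * \<gamma> * (ln (u i) - ln (v i)) \<le> 0"
    by (intro coordinate_potential_nonpos_of_neg [OF assms(1)]) simp
  moreover have "0 \<le> 2 * e * (R\<^sup>2 * u i + 4 * \<gamma> * R)"
    using e_pos u_pos [OF assms(1)] gamma_pos by (simp add: R_def)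
  ultimately show ?thesis
    by linarith
qed

lemma potential_step_le:
  "(\<Sum>i\<in>I. g i * (u i - v i)) + 4 * \<gamma> * ((\<Sum>i\<in>I. ln (u i)) - (\<Sum>i\<in>I. ln (v i)))
    \<le> 19 * (real (card I))\<^sup>2 * \<gamma>\<^sup>2 * e"
proof (cases "card I = 1")
  case True
  then obtain j where "I = {j}"
    by (auto simp: card_1_singleton_iff)
  then show ?thesis
    using sum_u sum_v e_pos by simp
next
  case False
  moreover have "card I \<noteq> 0"
    using finite_I I_nonempty by simp
  ultimately have m: "2 \<le> real (card I)"
    by linarith
  define R where "R = \<gamma> * (1 + 11/10 * card I)"
  have "(\<Sum>i\<in>I. g i * (u i - v i)) + 4 * \<gamma> * ((\<Sum>i\<in>I. ln (u i)) - (\<Sum>i\<in>I. ln (v i)))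
      = (\<Sum>i\<in>I. (g i + d) * (u i - v i) + 4 * \<gamma> * (ln (u i) - ln (v i)))"
    using sum_u sum_v
    by (simp add: sum.distrib sum_subtractf sum_distrib_left [symmetric] sum_distrib_right [symmetric] algebra_simps)
  also have "\<dots> \<le> (\<Sum>i\<in>I. 2 * e * (R\<^sup>2 * u i + 4 * \<gamma> * R))"
    using coordinate_potential_le by (simp add: R_def sum_mono)
  also have "\<dots> = 2 * e * (R\<^sup>2 + 4 * \<gamma> * R * card I)"
    by (simp add: sum.distrib sum_distrib_left [symmetric] sum_distrib_right [symmetric] sum_u algebra_simps)
  also have "\<dots> = 2 * e * \<gamma>\<^sup>2 * ((1 + 11/10 * card I)\<^sup>2 + 4 * (1 + 11/10 * card I) * card I)"
    by (simp add: R_def power2_eq_square algebra_simps)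
  also have "\<dots> \<le> 2 * e * \<gamma>\<^sup>2 * (19/2 * (real (card I))\<^sup>2)"
  proof -
    have "2 * card I \<le> (real (card I))\<^sup>2"
      using mult_right_mono [OF m, of "card I"] m by (simp add: power2_eq_square)
    moreover have "(1 + 11/10 * card I)\<^sup>2 + 4 * (1 + 11/10 * card I) * card I
        = 1 + 31/5 * card I + 561/100 * (real (card I))\<^sup>2"
      by (simp add: power2_eq_square algebra_simps)
    ultimately have "(1 + 11/10 * card I)\<^sup>2 + 4 * (1 + 11/10 * card I) * card I \<le> 19/2 * (real (card I))\<^sup>2"
      using m by linarith
    then show ?thesis
      using e_pos by (intro mult_left_mono) auto
  qed
  also have "\<dots> = 19 * (real (card I))\<^sup>2 * \<gamma>\<^sup>2 * e"
    by simp
  finally show ?thesis .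
qed

end

definition eta_gamma :: "real \<Rightarrow> nat \<Rightarrow> nat \<Rightarrow> nat \<Rightarrow> real" where
  "eta_gamma \<alpha> m n T = eta_base \<alpha> m n T * gamma_const n T"

text \<open>Along a run the dual weights start at m^(1-\<alpha>) \<le> m and each step raises them by at most
  \<eta>\<gamma>(1 + 11/10 m); the last condition keeps every step small for dual weights up to
  m + T\<eta>\<gamma>(1 + 11/10 m).\<close>
definition small_steps :: "real \<Rightarrow> nat \<Rightarrow> nat \<Rightarrow> nat \<Rightarrow> bool" where
  "small_steps \<alpha> m n T \<longleftrightarrow> 0 < eta_base \<alpha> m n T \<and> 0 < gamma_const n T
    \<and> eta_gamma \<alpha> m n T * (1 + 11/10 * m) \<le> 1/200
    \<and> eta_gamma \<alpha> m n T * (m + T * (eta_gamma \<alpha> m n T * (1 + 11/10 * m))) powr (\<alpha> / (1 - \<alpha>)) \<le> 1/500"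

locale small_step_run =
  fixes \<alpha> :: real and m n T :: nat
    and p :: "nat \<Rightarrow> nat \<Rightarrow> nat \<Rightarrow> real" and J :: "nat \<Rightarrow> nat" and w :: "nat \<Rightarrow> nat \<Rightarrow> real"
  assumes alpha_pos: "0 < \<alpha>" and alpha_less_half: "\<alpha> < 1/2" and m_pos: "1 \<le> m"
    and eta_pos: "0 < eta_base \<alpha> m n T" and gamma_pos: "0 < gamma_const n T"
    and small_growth: "eta_gamma \<alpha> m n T * (1 + 11/10 * m) \<le> 1/200"
    and small_weights: "eta_gamma \<alpha> m n T * (m + T * (eta_gamma \<alpha> m n T * (1 + 11/10 * m))) powr (\<alpha> / (1 - \<alpha>)) \<le> 1/500"
    and run: "alg1_run \<alpha> m n T p J w"
    and small_grad: "small_gradient m n T p J w"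
begin

lemma eta_gamma_pos: "0 < eta_gamma \<alpha> m n T"
  using eta_pos gamma_pos by (simp add: eta_gamma_def)

lemma weight_bounds:
  assumes "t \<in> {1..T+1}" "i \<in> {1..m}"
  shows "0 < w t i" "w t i \<le> 1" "(\<Sum>j=1..m. w t j) = 1"
proof -
  have "(\<forall>j\<in>{1..m}. 0 < w t j) \<and> (\<Sum>j=1..m. w t j) = 1"
  proof (cases "t = 1")
    case True
    then show ?thesis
      using run m_pos by (simp add: alg1_run_def)
  next
    case False
    then obtain s where "t = s + 1" "s \<in> {1..T}"
      using assms(1) by (cases t) auto
    then show ?thesis
      using run by (simp add: alg1_run_def in_simplex_def)
  qed
  then show "0 < w t i" "(\<Sum>j=1..m. w t j) = 1"
    using assms(2) by auto
  then show "w t i \<le> 1"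
    using member_le_sum [of i "{1..m}" "w t"] assms(2) \<open>(\<forall>j\<in>{1..m}. 0 < w t j) \<and> _\<close>
    by (simp add: less_imp_le)
qed

lemma eta_run_bounds:
  assumes "t \<in> {1..T}"
  shows "0 < eta_run \<alpha> m n T w t" "eta_run \<alpha> m n T w t \<le> eta_base \<alpha> m n T"
proof -
  have cand: "0 < eta_cand \<alpha> m n T w s \<and> eta_cand \<alpha> m n T w s \<le> eta_base \<alpha> m n T"
    if "s \<in> {1..T}" for s
  proof (cases "eta_base \<alpha> m n T \<le> Min ((\<lambda>i. w s i powr \<alpha>) ` {1..m})")
    case True
    then show ?thesis
      using eta_pos by (simp add: eta_cand_def)
  next
    case False
    have w: "0 < w s i" "w s i \<le> 1" if "i \<in> {1..m}" for i
      using weight_bounds [of s i] \<open>s \<in> {1..T}\<close> that by auto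
    have nonempty: "{1..m} \<noteq> {}"
      using m_pos by simp
    from False obtain i where i: "i \<in> {1..m}" "w s i powr \<alpha> < eta_base \<alpha> m n T"
      using nonempty by (auto simp: not_le Min_less_iff)
    have "Min ((\<lambda>i. w s i) ` {1..m}) \<le> w s i"
      using i by simp
    also have "\<dots> = w s i powr 1"
      using w [OF i(1)] by simp
    also have "\<dots> \<le> w s i powr \<alpha>"
      using w [OF i(1)] alpha_less_half by (intro powr_mono') auto
    finally have "Min ((\<lambda>i. w s i) ` {1..m}) \<le> eta_base \<alpha> m n T"
      using i(2) by simp
    moreover have "0 < Min ((\<lambda>i. w s i) ` {1..m})"
      using nonempty w by simp
    ultimately show ?thesis
      using False by (simp add: eta_cand_def)
  qed
  show "0 < eta_run \<alpha> m n T w t"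
    using assms cand by (simp add: eta_run_def)
  have "eta_run \<alpha> m n T w t \<le> eta_cand \<alpha> m n T w t"
    using assms by (simp add: eta_run_def)
  then show "eta_run \<alpha> m n T w t \<le> eta_base \<alpha> m n T"
    using cand [OF assms] by simp
qed

lemma dual_update:
  assumes "t \<in> {1..T}"
  obtains d where "\<And>i. i \<in> {1..m} \<Longrightarrow> w (t + 1) i powr (\<alpha> - 1)
    = w t i powr (\<alpha> - 1) + eta_run \<alpha> m n T w t * (loss_grad m n (p t) (J t) (w t) i + d)"
proof -
  have "\<exists>c. \<forall>i\<in>{1..m}. - (w (t + 1) i powr (\<alpha> - 1)) =
      - (w t i powr (\<alpha> - 1)) - eta_run \<alpha> m n T w t * loss_grad m n (p t) (J t) (w t) i + c"
    using run assms by (simp add: alg1_run_def)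
  then obtain c where c: "\<forall>i\<in>{1..m}. - (w (t + 1) i powr (\<alpha> - 1)) =
      - (w t i powr (\<alpha> - 1)) - eta_run \<alpha> m n T w t * loss_grad m n (p t) (J t) (w t) i + c"
    by blast
  have "0 < eta_run \<alpha> m n T w t"
    using eta_run_bounds [OF assms] by simp
  with c show ?thesis
    by (intro that [of "- c / eta_run \<alpha> m n T w t"]) (simp add: algebra_simps)
qed

lemma eta_gamma_powr_small:
  assumes "0 < x" "x powr (\<alpha> - 1) \<le> m + T * (eta_gamma \<alpha> m n T * (1 + 11/10 * m))"
  shows "eta_gamma \<alpha> m n T * x powr (-\<alpha>) \<le> 1/500"
proof -
  have "(\<alpha> - 1) * (\<alpha> / (1 - \<alpha>)) = -\<alpha>"
    using alpha_less_half by (simp add: field_simps)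
  then have "x powr (-\<alpha>) = (x powr (\<alpha> - 1)) powr (\<alpha> / (1 - \<alpha>))"
    by (simp add: powr_powr)
  also have "\<dots> \<le> (m + T * (eta_gamma \<alpha> m n T * (1 + 11/10 * m))) powr (\<alpha> / (1 - \<alpha>))"
    using assms alpha_pos alpha_less_half by (intro powr_mono2) auto
  finally have "eta_gamma \<alpha> m n T * x powr (-\<alpha>)
      \<le> eta_gamma \<alpha> m n T * (m + T * (eta_gamma \<alpha> m n T * (1 + 11/10 * m))) powr (\<alpha> / (1 - \<alpha>))"
    using eta_gamma_pos by (intro mult_left_mono) auto
  with small_weights show ?thesis
    by linarith
qed

lemma step_small_power_update:
  assumes t: "t \<in> {1..T}"
    and dual_bound: "\<And>i. i \<in> {1..m} \<Longrightarrow> w t i powr (\<alpha> - 1) \<le> m + T * (eta_gamma \<alpha> m n T * (1 + 11/10 * m))"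
  shows "\<exists>d. small_power_update {1..m} \<alpha> (eta_run \<alpha> m n T w t) (gamma_const n T) d (w t) (w (t + 1))
    (loss_grad m n (p t) (J t) (w t))"
proof -
  define e where "e = eta_run \<alpha> m n T w t"
  have e: "0 < e" "e * gamma_const n T \<le> eta_gamma \<alpha> m n T"
    using eta_run_bounds [OF t] gamma_pos by (simp_all add: e_def eta_gamma_def)
  obtain d where d: "\<And>i. i \<in> {1..m} \<Longrightarrow>
      w (t + 1) i powr (\<alpha> - 1) = w t i powr (\<alpha> - 1) + e * (loss_grad m n (p t) (J t) (w t) i + d)"
    using dual_update [OF t] unfolding e_def by blast
  have "small_power_update {1..m} \<alpha> e (gamma_const n T) d (w t) (w (t + 1))
    (loss_grad m n (p t) (J t) (w t))"
  proof unfold_locales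
    show "finite {1..m}" "{1..m} \<noteq> {}"
      using m_pos by auto
    show "\<alpha> < 1" "0 \<le> \<alpha>" "\<alpha> \<le> 1/2" "0 < e" "0 < gamma_const n T"
      using alpha_pos alpha_less_half e gamma_pos by auto
    show "\<And>i. i \<in> {1..m} \<Longrightarrow> 0 < w t i" "\<And>i. i \<in> {1..m} \<Longrightarrow> 0 < w (t + 1) i"
      using weight_bounds t by auto
    show "sum (w t) {1..m} = 1" "sum (w (t + 1)) {1..m} = 1"
      using weight_bounds [of _ 1] t m_pos by auto
    show "\<And>i. i \<in> {1..m} \<Longrightarrow> - gamma_const n T / w t i \<le> loss_grad m n (p t) (J t) (w t) i"
      "\<And>i. i \<in> {1..m} \<Longrightarrow> loss_grad m n (p t) (J t) (w t) i \<le> gamma_const n T"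
      using small_grad t by (auto simp: small_gradient_def)
    show "\<And>i. i \<in> {1..m} \<Longrightarrow> w (t + 1) i powr (\<alpha> - 1)
        = w t i powr (\<alpha> - 1) + e * (loss_grad m n (p t) (J t) (w t) i + d)"
      by (rule d)
    have "e * gamma_const n T * (1 + 11/10 * m) \<le> eta_gamma \<alpha> m n T * (1 + 11/10 * m)"
      using e(2) by (intro mult_right_mono) auto
    from order_trans [OF this small_growth]
    show "e * gamma_const n T * (1 + 11/10 * card {1..m}) \<le> 1/200"
      by simp
    show "e * gamma_const n T * w t i powr (-\<alpha>) \<le> 1/500" if "i \<in> {1..m}" for i
    proof -
      have "e * gamma_const n T * w t i powr (-\<alpha>) \<le> eta_gamma \<alpha> m n T * w t i powr (-\<alpha>)"
        using e(2) by (intro mult_right_mono) auto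
      also have "\<dots> \<le> 1/500"
        using eta_gamma_powr_small [OF _ dual_bound [OF that]] weight_bounds [of t i] t that by simp
      finally show ?thesis .
    qed
  qed
  then show ?thesis
    unfolding e_def by blast
qed

lemma step_bounds:
  assumes t: "t \<in> {1..T}"
    and dual_bound: "\<And>i. i \<in> {1..m} \<Longrightarrow> w t i powr (\<alpha> - 1) \<le> m + T * (eta_gamma \<alpha> m n T * (1 + 11/10 * m))"
  shows "\<And>i. i \<in> {1..m} \<Longrightarrow>
      w (t + 1) i powr (\<alpha> - 1) \<le> w t i powr (\<alpha> - 1) + eta_gamma \<alpha> m n T * (1 + 11/10 * m)"
    and "(\<Sum>i=1..m. loss_grad m n (p t) (J t) (w t) i * (w t i - w (t + 1) i))
      + 4 * gamma_const n T * ((\<Sum>i=1..m. ln (w t i)) - (\<Sum>i=1..m. ln (w (t + 1) i)))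
      \<le> 19 * (real m)\<^sup>2 * (gamma_const n T)\<^sup>2 * eta_base \<alpha> m n T"
proof -
  obtain d where upd: "small_power_update {1..m} \<alpha> (eta_run \<alpha> m n T w t) (gamma_const n T) d (w t) (w (t + 1))
      (loss_grad m n (p t) (J t) (w t))"
    using step_small_power_update [OF assms] by blast
  have e: "eta_run \<alpha> m n T w t * gamma_const n T \<le> eta_gamma \<alpha> m n T"
    using eta_run_bounds [OF t] gamma_pos by (simp add: eta_gamma_def)
  have card: "card {1..m} = m"
    by simp
  show "w (t + 1) i powr (\<alpha> - 1) \<le> w t i powr (\<alpha> - 1) + eta_gamma \<alpha> m n T * (1 + 11/10 * m)"
    if "i \<in> {1..m}" for i
  proof -
    have "eta_run \<alpha> m n T w t * (gamma_const n T * (1 + 11/10 * m)) \<le> eta_gamma \<alpha> m n T * (1 + 11/10 * m)"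
      using mult_right_mono [OF e, of "1 + 11/10 * m"] by (simp add: mult.assoc)
    with small_power_update.update_growth [OF upd that, unfolded card] show ?thesis
      by linarith
  qed
  have "19 * (real m)\<^sup>2 * (gamma_const n T)\<^sup>2 * eta_run \<alpha> m n T w t
      \<le> 19 * (real m)\<^sup>2 * (gamma_const n T)\<^sup>2 * eta_base \<alpha> m n T"
    using eta_run_bounds [OF t] by (intro mult_left_mono) auto
  with small_power_update.potential_step_le [OF upd]
  show "(\<Sum>i=1..m. loss_grad m n (p t) (J t) (w t) i * (w t i - w (t + 1) i))
      + 4 * gamma_const n T * ((\<Sum>i=1..m. ln (w t i)) - (\<Sum>i=1..m. ln (w (t + 1) i)))
      \<le> 19 * (real m)\<^sup>2 * (gamma_const n T)\<^sup>2 * eta_base \<alpha> m n T"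
    by simp
qed

lemma dual_weight_bound:
  assumes "t \<le> T" "i \<in> {1..m}"
  shows "w (t + 1) i powr (\<alpha> - 1) \<le> m + t * (eta_gamma \<alpha> m n T * (1 + 11/10 * m))"
  using assms
proof (induction t arbitrary: i)
  case 0
  have "w 1 i powr (\<alpha> - 1) = real m powr (1 - \<alpha>)"
    using run 0 by (simp add: alg1_run_def powr_divide powr_minus_divide [symmetric])
  also have "\<dots> \<le> real m powr 1"
    using m_pos alpha_pos by (intro powr_mono) auto
  finally show ?case
    using m_pos by simp
next
  case (Suc t)
  define E where "E = eta_gamma \<alpha> m n T * (1 + 11/10 * m)"
  have "0 \<le> E"
    using eta_gamma_pos by (simp add: E_def)
  have IH: "w (t + 1) j powr (\<alpha> - 1) \<le> m + t * E" if "j \<in> {1..m}" for j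
    using Suc.IH [OF _ that] Suc.prems by (simp add: E_def)
  have "real t * E \<le> T * E"
    using Suc.prems \<open>0 \<le> E\<close> by (intro mult_right_mono) auto
  then have "w (t + 1) j powr (\<alpha> - 1) \<le> m + T * E" if "j \<in> {1..m}" for j
    using IH [OF that] by linarith
  then have "w (t + 1 + 1) i powr (\<alpha> - 1) \<le> w (t + 1) i powr (\<alpha> - 1) + E"
    using step_bounds(1) [of "t + 1" i] Suc.prems unfolding E_def by simp
  with IH [OF Suc.prems(2)] show ?case
    unfolding E_def [symmetric] by (simp add: algebra_simps)
qed

lemma phi_Suc_le:
  assumes "t < T"
  shows "phi \<alpha> m n T p J w (Suc t) \<le> phi \<alpha> m n T p J w t"
proof -
  have "real t * (eta_gamma \<alpha> m n T * (1 + 11/10 * m)) \<le> T * (eta_gamma \<alpha> m n T * (1 + 11/10 * m))"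
    using assms eta_gamma_pos by (intro mult_right_mono) auto
  then have "w (t + 1) i powr (\<alpha> - 1) \<le> m + T * (eta_gamma \<alpha> m n T * (1 + 11/10 * m))"
    if "i \<in> {1..m}" for i
    using dual_weight_bound [OF _ that, of t] assms by linarith
  then have "(\<Sum>i=1..m. loss_grad m n (p (t + 1)) (J (t + 1)) (w (t + 1)) i * (w (t + 1) i - w (t + 1 + 1) i))
      + 4 * gamma_const n T * ((\<Sum>i=1..m. ln (w (t + 1) i)) - (\<Sum>i=1..m. ln (w (t + 1 + 1) i)))
      \<le> 19 * (real m)\<^sup>2 * (gamma_const n T)\<^sup>2 * eta_base \<alpha> m n T"
    using step_bounds(2) [of "t + 1"] assms by simp
  then show ?thesis
    by (simp add: phi_def algebra_simps)
qed

lemma phi_antimono: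
  assumes "t1 \<le> t2" "t2 \<le> T"
  shows "phi \<alpha> m n T p J w t2 \<le> phi \<alpha> m n T p J w t1"
  using assms
proof (induction t2 rule: dec_induct)
  case (step k)
  then show ?case
    using phi_Suc_le [of k] by simp
qed simp

end

lemma eta_gamma_le_inverse_sqrt:
  assumes "2 \<le> T" "1 \<le> m" "1 \<le> n" "0 \<le> \<alpha>"
  shows "0 < eta_gamma \<alpha> m n T" "eta_gamma \<alpha> m n T \<le> 1 / sqrt T"
proof -
  have "0 < ln (real T)" "1 \<le> real m powr ((1 + \<alpha>) / 2)"
    using assms by (auto intro: ge_one_powr_ge_zero)
  then have eq: "eta_gamma \<alpha> m n T = 1 / (sqrt T * real m powr ((1 + \<alpha>) / 2))"
    using assms by (simp add: eta_gamma_def eta_base_def gamma_const_def field_simps)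
  show "0 < eta_gamma \<alpha> m n T"
    using assms by (simp add: eq)
  show "eta_gamma \<alpha> m n T \<le> 1 / sqrt T"
    unfolding eq using assms \<open>1 \<le> real m powr _\<close>
    by (intro divide_left_mono) (auto intro: mult_pos_pos order.trans [OF _ mult_left_mono, of _ "sqrt T"])
qed

lemma small_steps_if_sqrt_large:
  assumes "0 < \<alpha>" "\<alpha> < 1/2" "1 \<le> m" "1 \<le> n" "2 \<le> T"
    and growth: "(1 + 11/10 * m) / sqrt T \<le> 1/200"
    and weights: "(1 + 21/10 * m) powr (\<alpha> / (1 - \<alpha>)) * sqrt T powr (\<alpha> / (1 - \<alpha>) - 1) \<le> 1/500"
  shows "small_steps \<alpha> m n T"
proof -
  define q where "q = \<alpha> / (1 - \<alpha>)"
  define e where "e = eta_gamma \<alpha> m n T"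
  have q: "0 < q" "q < 1"
    using assms by (auto simp: q_def field_simps)
  have T: "1 \<le> sqrt T" "real T / sqrt T = sqrt T"
    using assms(5) by (auto simp: real_div_sqrt)
  have e: "0 < e" "e \<le> 1 / sqrt T"
    using eta_gamma_le_inverse_sqrt [of T m n \<alpha>] assms by (simp_all add: e_def)
  have "e * (1 + 11/10 * m) \<le> 1 / sqrt T * (1 + 11/10 * m)"
    using e by (intro mult_right_mono) auto
  also have "\<dots> = (1 + 11/10 * m) / sqrt T"
    by simp
  finally have "e * (1 + 11/10 * m) \<le> 1/200"
    using growth by linarith
  moreover have "e * (m + T * (e * (1 + 11/10 * m))) powr q \<le> 1/500"
  proof -
    have "T * e \<le> sqrt T"
      using e T mult_left_mono [OF e(2), of "real T"] by simp
    then have "T * e * (1 + 11/10 * m) \<le> sqrt T * (1 + 11/10 * m)"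
      by (intro mult_right_mono) auto
    moreover have "real m \<le> sqrt T * m"
      using mult_right_mono [OF T(1), of "real m"] by simp
    ultimately have "m + T * (e * (1 + 11/10 * m)) \<le> sqrt T * (1 + 21/10 * m)"
      by (simp add: algebra_simps)
    then have "(m + T * (e * (1 + 11/10 * m))) powr q \<le> sqrt T powr q * (1 + 21/10 * m) powr q"
      using q e by (simp add: powr_mult [symmetric] powr_mono2)
    then have "e * (m + T * (e * (1 + 11/10 * m))) powr q \<le> 1 / sqrt T * (sqrt T powr q * (1 + 21/10 * m) powr q)"
      using e by (intro mult_mono) auto
    also have "\<dots> = (1 + 21/10 * m) powr q * sqrt T powr (q - 1)"
      using T by (simp add: powr_diff)
    finally show ?thesis
      using weights by (simp add: q_def)
  qed
  moreover have "0 < gamma_const n T" "0 < eta_base \<alpha> m n T"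
    using assms by (simp_all add: gamma_const_def eta_base_def)
  ultimately show ?thesis
    by (simp add: small_steps_def e_def q_def)
qed

lemma eventually_small_steps:
  assumes "0 < \<alpha>" "\<alpha> < 1/2" "1 \<le> m" "1 \<le> n"
  shows "\<forall>\<^sub>F T in sequentially. small_steps \<alpha> m n T"
proof -
  define q where "q = \<alpha> / (1 - \<alpha>)"
  have "q < 1"
    using assms by (simp add: q_def field_simps)
  have sqrt_T: "filterlim (\<lambda>T. sqrt (real T)) at_top sequentially"
    by (rule filterlim_compose [OF sqrt_at_top filterlim_real_sequentially])
  have "((\<lambda>T. (1 + 11/10 * m) / sqrt T) \<longlongrightarrow> 0) sequentially"
    by (intro tendsto_divide_0 [OF tendsto_const] filterlim_at_top_imp_at_infinity sqrt_T)
  then have "\<forall>\<^sub>F T in sequentially. (1 + 11/10 * m) / sqrt T < 1/200"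
    by (rule order_tendstoD) simp
  moreover have "((\<lambda>T. (1 + 21/10 * m) powr q * sqrt T powr (q - 1)) \<longlongrightarrow> 0) sequentially"
    using \<open>q < 1\<close> by (intro tendsto_mult_right_zero tendsto_neg_powr sqrt_T) simp
  then have "\<forall>\<^sub>F T in sequentially. (1 + 21/10 * m) powr q * sqrt T powr (q - 1) < 1/500"
    by (rule order_tendstoD) simp
  ultimately show ?thesis
    using eventually_ge_at_top [of 2]
    by eventually_elim (use assms in \<open>auto simp: q_def intro: small_steps_if_sqrt_large\<close>)
qed

theorem lemma3:
  fixes \<alpha> :: real and m n :: nat
  assumes "0 < \<alpha>" and "\<alpha> < 1 / 2" and "1 \<le> m" and "1 \<le> n"
  shows "\<exists>T0. \<forall>T \<ge> T0. \<forall>p J w.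
           valid_input m n T p J \<longrightarrow> alg1_run \<alpha> m n T p J w \<longrightarrow> small_gradient m n T p J w \<longrightarrow>
           (\<forall>t1 t2. t1 \<le> t2 \<longrightarrow> t2 \<le> T \<longrightarrow> phi \<alpha> m n T p J w t2 \<le> phi \<alpha> m n T p J w t1)"
proof -
  obtain T0 where T0: "\<And>T. T0 \<le> T \<Longrightarrow> small_steps \<alpha> m n T"
    using eventually_small_steps [OF assms] unfolding eventually_sequentially by blast
  show ?thesis
  proof (intro exI [of _ T0] allI impI)
    fix T p J w and t1 t2 :: nat
    assume "T0 \<le> T" and run: "alg1_run \<alpha> m n T p J w" and grad: "small_gradient m n T p J w"
      and "t1 \<le> t2" "t2 \<le> T"
    interpret small_step_run \<alpha> m n T p J w
      using assms T0 [OF \<open>T0 \<le> T\<close>] run grad by unfold_locales (auto simp: small_steps_def)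
    show "phi \<alpha> m n T p J w t2 \<le> phi \<alpha> m n T p J w t1"
      using phi_antimono \<open>t1 \<le> t2\<close> \<open>t2 \<le> T\<close> .
  qed
qed

end
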